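(* Let $K$ be a field of characteristic $0$ with algebraic closure $\bar K$ and $G_K=\operatorname{Gal}(\bar K/K)$, let $V$ be an algebraic variety defined over $K$, let $\mathcal{A}_V=\operatorname{Aut}(V)$ be the group of $\bar K$-automorphisms of $V$, and let $f:V\to V$ be a $\bar K$-endomorphism whose field of moduli is contained in $K$, i.e., for every $\sigma\in G_K$ there is $\varphi_\sigma\in\mathcal{A}_V$ with $f^\sigma=f^{\varphi_\sigma}$. Let $\mathcal{A}_f=\{\alpha\in\mathcal{A}_V: f^\alpha=f\}$, so that $\varphi_\sigma$ is well defined as an element of $\mathcal{A}_f\backslash\mathcal{A}_V$, giving a map $\varphi:G_K\to\mathcal{A}_f\backslash\mathcal{A}_V$. Let $\mathcal{N}_f$ be the normalizer of $\mathcal{A}_f$ in $\mathcal{A}_V$. Assume that $\mathcal{A}_f$ is finite and that $\mathcal{A}_f$ is defined over $K$ (i.e., $\alpha^\sigma\in\mathcal{A}_f$ for all $\alpha\in\mathcal{A}_f$, $\sigma\in G_K$). Then: (a) $\varphi_\sigma\in\mathcal{N}_f$ for every $\sigma\in G_K$ (for any choice of representative), and $\varphi:G_K\to\mathcal{A}_f\backslash\mathcal{N}_f$ is a $1$-cocycle with values in a group, i.e., $\varphi_{\sigma\tau}\equiv\varphi_\tau\varphi_\sigma^\tau\pmod{\mathcal{A}_f}$ for all $\sigma,\tau\in G_K$; hence it gives an element of $H^1(G_K,\mathcal{A}_f\backslash\mathcal{N}_f)$. (b) The following are equivalent: (1) there is $\gamma\in\mathcal{A}_V$ such that $f^\gamma$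 is defined over $K$ (i.e., $K$ is a field of definition for $f$); (2) there is $\delta\in\mathcal{A}_V$ such that $\varphi_\sigma=\mathcal{A}_f\delta^{-1}\delta^\sigma$ for all $\sigma\in G_K$ (i.e., $\varphi$ is a $G_K$-to-$\mathcal{A}_f\backslash\mathcal{N}_f$ coboundary).
   Context: For $\varphi\in\mathcal{A}_V$, $f^\varphi:=\varphi^{-1}\circ f\circ\varphi$. For $\sigma\in G_K$, $f^\sigma$ and $\varphi^\sigma$ denote the maps obtained by applying $\sigma$ to coefficients; Galois action is written exponentially as a right action, so $(x^\sigma)^\tau=x^{\sigma\tau}$, and $(f^\varphi)^\sigma=(f^\sigma)^{\varphi^\sigma}$. *)

theory Defs
  imports "HOL-Algebra.Group_Action"
begin

text \<open>E is the monoid of Kbar-endomorphisms of V under composition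
  (mult x y = x o y), so Units E is Aut(V). G is the absolute Galois group G_K.
  gal x s is x^s, the endomorphism obtained by applying s to coefficients;
  it is a right action by monoid endomorphisms.\<close>

locale galois_endo_action =
  E: monoid E + G: group G
  for E (structure) and G (structure) and gal :: "'e \<Rightarrow> 'g \<Rightarrow> 'e" +
  assumes gal_closed: "\<lbrakk>x \<in> carrier E; s \<in> carrier G\<rbrakk> \<Longrightarrow> gal x s \<in> carrier E"
    and gal_mult: "\<lbrakk>x \<in> carrier E; y \<in> carrier E; s \<in> carrier G\<rbrakk>
        \<Longrightarrow> gal (x \<otimes>\<^bsub>E\<^esub> y) s = gal x s \<otimes>\<^bsub>E\<^esub> gal y s"
    and gal_one: "s \<in> carrier G \<Longrightarrow> gal \<one>\<^bsub>E\<^esub> s = \<one>\<^bsub>E\<^esub>"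
    and gal_comp: "\<lbrakk>x \<in> carrier E; s \<in> carrier G; t \<in> carrier G\<rbrakk>
        \<Longrightarrow> gal (gal x s) t = gal x (s \<otimes>\<^bsub>G\<^esub> t)"
    and gal_id: "x \<in> carrier E \<Longrightarrow> gal x \<one>\<^bsub>G\<^esub> = x"

definition conj_by :: "('e, 'm) monoid_scheme \<Rightarrow> 'e \<Rightarrow> 'e \<Rightarrow> 'e" where
  "conj_by E f \<phi> = inv\<^bsub>E\<^esub> \<phi> \<otimes>\<^bsub>E\<^esub> f \<otimes>\<^bsub>E\<^esub> \<phi>"

abbreviation AutGrp :: "('e, 'm) monoid_scheme \<Rightarrow> 'e monoid" where
  "AutGrp E \<equiv> units_of E"

definition Aut_f :: "('e, 'm) monoid_scheme \<Rightarrow> 'e \<Rightarrow> 'e set" where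
  "Aut_f E f = {\<alpha> \<in> Units E. conj_by E f \<alpha> = f}"

definition Norm_f :: "('e, 'm) monoid_scheme \<Rightarrow> 'e \<Rightarrow> 'e set" where
  "Norm_f E f = normalizer (AutGrp E) (Aut_f E f)"

definition defined_over_K :: "('g, 'n) monoid_scheme \<Rightarrow> ('e \<Rightarrow> 'g \<Rightarrow> 'e) \<Rightarrow> 'e \<Rightarrow> bool" where
  "defined_over_K G gal x \<longleftrightarrow> (\<forall>s \<in> carrier G. gal x s = x)"

end

theory Submission
  imports Defs "HOL-Algebra.Zassenhaus"
begin

text \<open>Conjugation transports stabilizers, A_(f^phi) = phi^-1 A_f phi, while applying sigma
  gives A_(f^sigma) = (A_f)^sigma = A_f; hence every phi_sigma normalizes A_f. Since f^phi = f^psi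
  iff phi psi^-1 lies in A_f, identities between conjugates of f are identities between right
  cosets of A_f. Applying tau to f^sigma = f^(phi_sigma) gives the cocycle relation, and f^gamma is
  fixed by sigma exactly when f^sigma = f^(delta^-1 delta^sigma) for delta = gamma^-1.\<close>

lemma (in group) rcos_eq_iff:
  assumes "subgroup H G" "a \<in> carrier G" "b \<in> carrier G"
  shows "H #> a = H #> b \<longleftrightarrow> a \<otimes> inv b \<in> H"
  using assms repr_independence rcos_self subgroup.rcos_module[OF _ is_group] by metis

context monoid begin

lemma Units_inv_mult:
  assumes "a \<in> Units G" "b \<in> Units G"
  shows "inv (a \<otimes> b) = inv b \<otimes> inv a"
  using group.inv_mult_group[OF units_group, of a b] assms
  by (simp add: units_of_carrier units_of_mult units_of_inv)

lemma Units_conj_cancel: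
  assumes "\<phi> \<in> Units G" "x \<in> carrier G"
  shows "inv \<phi> \<otimes> (\<phi> \<otimes> x \<otimes> inv \<phi>) \<otimes> \<phi> = x" and "\<phi> \<otimes> (inv \<phi> \<otimes> x \<otimes> \<phi>) \<otimes> inv \<phi> = x"
  using assms by (simp_all add: m_assoc Units_closed) (simp_all add: m_assoc[symmetric] Units_closed)

lemma conj_by_closed: "f \<in> carrier G \<Longrightarrow> \<phi> \<in> Units G \<Longrightarrow> conj_by G f \<phi> \<in> carrier G"
  unfolding conj_by_def by auto

lemma conj_by_one: "f \<in> carrier G \<Longrightarrow> conj_by G f \<one> = f"
  unfolding conj_by_def by simp

lemma conj_by_mult:
  assumes "f \<in> carrier G" "a \<in> Units G" "b \<in> Units G"
  shows "conj_by G (conj_by G f a) b = conj_by G f (a \<otimes> b)"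
  using assms unfolding conj_by_def by (simp add: Units_inv_mult m_assoc Units_closed)

lemma conj_by_inv_eq_iff:
  assumes "x \<in> carrier G" "y \<in> carrier G" "a \<in> Units G"
  shows "conj_by G x (inv a) = y \<longleftrightarrow> x = conj_by G y a"
  using assms unfolding conj_by_def
  by (auto simp: m_assoc Units_closed) (simp_all add: m_assoc[symmetric] Units_closed)

lemma conj_by_eq_iff:
  assumes "f \<in> carrier G" "a \<in> Units G" "b \<in> Units G"
  shows "conj_by G f a = conj_by G f b \<longleftrightarrow> a \<otimes> inv b \<in> Aut_f G f"
proof -
  have "conj_by G f (a \<otimes> inv b) = conj_by G (conj_by G f a) (inv b)"
    using assms by (simp add: conj_by_mult)
  also have "\<dots> = f \<longleftrightarrow> conj_by G f a = conj_by G f b"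
    using assms by (simp add: conj_by_inv_eq_iff conj_by_closed)
  finally show ?thesis
    using assms by (auto simp: Aut_f_def)
qed

lemma subgroup_Aut_f:
  assumes "f \<in> carrier G"
  shows "subgroup (Aut_f G f) (units_of G)"
proof -
  have inv: "inv \<alpha> \<in> Aut_f G f" if "\<alpha> \<in> Aut_f G f" for \<alpha>
    using that conj_by_eq_iff[OF assms Units_one_closed, of \<alpha>] assms by (auto simp: Aut_f_def conj_by_one)
  show ?thesis
  proof
    show "Aut_f G f \<subseteq> carrier (units_of G)"
      by (auto simp: Aut_f_def units_of_carrier)
    show "\<one>\<^bsub>units_of G\<^esub> \<in> Aut_f G f"
      using assms by (simp add: Aut_f_def units_of_one conj_by_one)
    show "x \<otimes>\<^bsub>units_of G\<^esub> y \<in> Aut_f G f" if "x \<in> Aut_f G f" "y \<in> Aut_f G f" for x y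
      using that assms conj_by_mult[of f x y] by (auto simp: Aut_f_def units_of_mult)
    show "inv\<^bsub>units_of G\<^esub> x \<in> Aut_f G f" if "x \<in> Aut_f G f" for x
      using that inv by (auto simp: Aut_f_def units_of_inv)
  qed
qed

lemma conj_by_eq_iff_rcos_eq:
  assumes "f \<in> carrier G" "a \<in> Units G" "b \<in> Units G"
  shows "conj_by G f a = conj_by G f b
    \<longleftrightarrow> Aut_f G f #>\<^bsub>units_of G\<^esub> a = Aut_f G f #>\<^bsub>units_of G\<^esub> b"
  using group.rcos_eq_iff[OF units_group subgroup_Aut_f] conj_by_eq_iff assms
  by (simp add: units_of_carrier units_of_mult units_of_inv)

lemma in_Aut_f_rcos_iff:
  assumes "f \<in> carrier G" "a \<in> Units G" "b \<in> Units G"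
  shows "a \<in> Aut_f G f #>\<^bsub>units_of G\<^esub> b \<longleftrightarrow> conj_by G f a = conj_by G f b"
  using subgroup.rcos_module[OF subgroup_Aut_f units_group] conj_by_eq_iff assms
  by (simp add: units_of_carrier units_of_mult units_of_inv)

lemma Aut_f_conj_by:
  assumes f: "f \<in> carrier G" and \<phi>: "\<phi> \<in> Units G"
  shows "Aut_f G (conj_by G f \<phi>) = (\<lambda>h. inv \<phi> \<otimes> h \<otimes> \<phi>) ` Aut_f G f"
proof -
  have mem: "x \<in> Aut_f G (conj_by G f \<phi>) \<longleftrightarrow> \<phi> \<otimes> x \<otimes> inv \<phi> \<in> Aut_f G f"
    if "x \<in> Units G" for x
    using conj_by_eq_iff[OF f _ \<phi>, of "\<phi> \<otimes> x"] that \<phi> f by (auto simp: Aut_f_def conj_by_mult)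
  have sub: "Aut_f G f \<subseteq> Units G" "Aut_f G (conj_by G f \<phi>) \<subseteq> Units G"
    by (auto simp: Aut_f_def)
  show ?thesis
  proof
    show "Aut_f G (conj_by G f \<phi>) \<subseteq> (\<lambda>h. inv \<phi> \<otimes> h \<otimes> \<phi>) ` Aut_f G f"
    proof
      fix x assume x: "x \<in> Aut_f G (conj_by G f \<phi>)"
      then have "x \<in> Units G" using sub(2) by blast
      show "x \<in> (\<lambda>h. inv \<phi> \<otimes> h \<otimes> \<phi>) ` Aut_f G f"
      proof (rule image_eqI)
        show "x = inv \<phi> \<otimes> (\<phi> \<otimes> x \<otimes> inv \<phi>) \<otimes> \<phi>"
          using Units_conj_cancel(1)[OF \<phi>, of x] \<open>x \<in> Units G\<close> by (simp add: Units_closed)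
        show "\<phi> \<otimes> x \<otimes> inv \<phi> \<in> Aut_f G f"
          using mem[OF \<open>x \<in> Units G\<close>] x by simp
      qed
    qed
    show "(\<lambda>h. inv \<phi> \<otimes> h \<otimes> \<phi>) ` Aut_f G f \<subseteq> Aut_f G (conj_by G f \<phi>)"
    proof
      fix x assume "x \<in> (\<lambda>h. inv \<phi> \<otimes> h \<otimes> \<phi>) ` Aut_f G f"
      then obtain h where h: "h \<in> Aut_f G f" "x = inv \<phi> \<otimes> h \<otimes> \<phi>" by blast
      then have "h \<in> Units G" using sub(1) by blast
      then have "x \<in> Units G" using h(2) \<phi> by simp
      then show "x \<in> Aut_f G (conj_by G f \<phi>)"
        using mem h Units_conj_cancel(2)[OF \<phi>, of h] \<open>h \<in> Units G\<close> by (simp add: Units_closed)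
    qed
  qed
qed

lemma in_Norm_f_if_Aut_f_conj_by_eq:
  assumes f: "f \<in> carrier G" and \<phi>: "\<phi> \<in> Units G"
    and eq: "Aut_f G (conj_by G f \<phi>) = Aut_f G f"
  shows "\<phi> \<in> Norm_f G f"
proof -
  have sub: "Aut_f G f \<subseteq> Units G"
    by (auto simp: Aut_f_def)
  have "(\<lambda>h. \<phi> \<otimes> h \<otimes> inv \<phi>) ` Aut_f G f
      = (\<lambda>h. \<phi> \<otimes> h \<otimes> inv \<phi>) ` (\<lambda>h. inv \<phi> \<otimes> h \<otimes> \<phi>) ` Aut_f G f"
    using eq Aut_f_conj_by[OF f \<phi>] by simp
  also have "\<dots> = Aut_f G f"
    unfolding image_image using Units_conj_cancel(2)[OF \<phi>] sub
    by (simp cong: image_cong add: subset_iff Units_closed)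
  finally have conj_eq: "(\<lambda>h. \<phi> \<otimes> h \<otimes> inv \<phi>) ` Aut_f G f = Aut_f G f" .
  have "\<phi> <#\<^bsub>units_of G\<^esub> Aut_f G f #>\<^bsub>units_of G\<^esub> inv\<^bsub>units_of G\<^esub> \<phi>
      = (\<lambda>h. \<phi> \<otimes> h \<otimes> inv \<phi>) ` Aut_f G f"
    using \<phi> unfolding l_coset_def r_coset_def by (auto simp: units_of_mult units_of_inv)
  then show ?thesis
    using \<phi> sub conj_eq
    unfolding Norm_f_def normalizer_def stabilizer_def by (simp add: units_of_carrier)
qed

end

context galois_endo_action
begin

lemma gal_Units:
  assumes "\<phi> \<in> Units E" "s \<in> carrier G"
  shows "gal \<phi> s \<in> Units E" and "gal (inv \<phi>) s = inv (gal \<phi> s)"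
proof -
  have "gal \<phi> s \<otimes> gal (inv \<phi>) s = \<one>" "gal (inv \<phi>) s \<otimes> gal \<phi> s = \<one>"
    using assms gal_mult[of \<phi> "inv \<phi>" s, symmetric] gal_mult[of "inv \<phi>" \<phi> s, symmetric]
    by (simp_all add: gal_one E.Units_closed)
  moreover have "gal \<phi> s \<in> carrier E" "gal (inv \<phi>) s \<in> carrier E"
    using assms by (simp_all add: gal_closed E.Units_closed)
  ultimately show "gal \<phi> s \<in> Units E" "gal (inv \<phi>) s = inv (gal \<phi> s)"
    by (auto simp: Units_def intro: E.inv_unique')
qed

lemma gal_conj_by:
  assumes "f \<in> carrier E" "\<phi> \<in> Units E" "s \<in> carrier G"
  shows "gal (conj_by E f \<phi>) s = conj_by E (gal f s) (gal \<phi> s)"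
  using assms gal_Units[OF assms(2,3)] unfolding conj_by_def
  by (simp add: gal_mult gal_closed E.Units_closed)

lemma gal_gal_inv:
  assumes "x \<in> carrier E" "s \<in> carrier G"
  shows "gal (gal x s) (inv\<^bsub>G\<^esub> s) = x" and "gal (gal x (inv\<^bsub>G\<^esub> s)) s = x"
  using assms by (simp_all add: gal_comp gal_id)

lemma Aut_f_gal:
  assumes f: "f \<in> carrier E" and s: "s \<in> carrier G"
  shows "Aut_f E (gal f s) = (\<lambda>\<alpha>. gal \<alpha> s) ` Aut_f E f"
proof
  show "(\<lambda>\<alpha>. gal \<alpha> s) ` Aut_f E f \<subseteq> Aut_f E (gal f s)"
    using f s by (auto simp: Aut_f_def gal_Units gal_conj_by[symmetric])
  show "Aut_f E (gal f s) \<subseteq> (\<lambda>\<alpha>. gal \<alpha> s) ` Aut_f E f"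
  proof
    fix x assume "x \<in> Aut_f E (gal f s)"
    then have x: "x \<in> Units E" "conj_by E (gal f s) x = gal f s"
      by (auto simp: Aut_f_def)
    define y where "y = gal x (inv\<^bsub>G\<^esub> s)"
    have y: "y \<in> Units E" "gal y s = x"
      using x(1) s gal_gal_inv(2) by (auto simp: y_def gal_Units)
    have "gal (conj_by E f y) s = gal f s"
      using gal_conj_by[OF f y(1) s] x(2) y(2) by simp
    then have "conj_by E f y = f"
      using gal_gal_inv(1)[OF _ s] E.conj_by_closed[OF f y(1)] f by metis
    then show "x \<in> (\<lambda>\<alpha>. gal \<alpha> s) ` Aut_f E f"
      using y by (auto simp: Aut_f_def)
  qed
qed

lemma gal_image_Aut_f:
  assumes "\<forall>\<alpha> \<in> Aut_f E f. \<forall>s \<in> carrier G. gal \<alpha> s \<in> Aut_f E f" "s \<in> carrier G"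
  shows "(\<lambda>\<alpha>. gal \<alpha> s) ` Aut_f E f = Aut_f E f"
proof
  show "(\<lambda>\<alpha>. gal \<alpha> s) ` Aut_f E f \<subseteq> Aut_f E f"
    using assms by blast
  show "Aut_f E f \<subseteq> (\<lambda>\<alpha>. gal \<alpha> s) ` Aut_f E f"
  proof
    fix \<alpha> assume \<alpha>: "\<alpha> \<in> Aut_f E f"
    then have "\<alpha> = gal (gal \<alpha> (inv\<^bsub>G\<^esub> s)) s"
      using gal_gal_inv(2) assms(2) by (auto simp: Aut_f_def)
    moreover have "gal \<alpha> (inv\<^bsub>G\<^esub> s) \<in> Aut_f E f"
      using assms \<alpha> by simp
    ultimately show "\<alpha> \<in> (\<lambda>\<alpha>. gal \<alpha> s) ` Aut_f E f"
      by blast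
  qed
qed

lemma gal_mult_conj_by:
  assumes f: "f \<in> carrier E" and s: "s \<in> carrier G" and t: "t \<in> carrier G"
    and \<phi>s: "\<phi>s \<in> Units E" "gal f s = conj_by E f \<phi>s"
    and \<phi>t: "\<phi>t \<in> Units E" "gal f t = conj_by E f \<phi>t"
  shows "gal f (s \<otimes>\<^bsub>G\<^esub> t) = conj_by E f (\<phi>t \<otimes> gal \<phi>s t)"
proof -
  have "gal f (s \<otimes>\<^bsub>G\<^esub> t) = gal (conj_by E f \<phi>s) t"
    using f s t \<phi>s by (simp add: gal_comp[symmetric])
  also have "\<dots> = conj_by E (conj_by E f \<phi>t) (gal \<phi>s t)"
    using gal_conj_by[OF f \<phi>s(1) t] \<phi>t by simp
  also have "\<dots> = conj_by E f (\<phi>t \<otimes> gal \<phi>s t)"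
    using f \<phi>t t \<phi>s by (simp add: E.conj_by_mult gal_Units)
  finally show ?thesis .
qed

lemma defined_over_K_conj_by_inv_iff:
  assumes f: "f \<in> carrier E" and \<delta>: "\<delta> \<in> Units E"
  shows "defined_over_K G gal (conj_by E f (inv \<delta>))
    \<longleftrightarrow> (\<forall>s \<in> carrier G. gal f s = conj_by E f (inv \<delta> \<otimes> gal \<delta> s))"
proof -
  have "gal (conj_by E f (inv \<delta>)) s = conj_by E f (inv \<delta>)
      \<longleftrightarrow> gal f s = conj_by E f (inv \<delta> \<otimes> gal \<delta> s)" if s: "s \<in> carrier G" for s
  proof -
    have "gal (conj_by E f (inv \<delta>)) s = conj_by E (gal f s) (inv (gal \<delta> s))"
      using gal_conj_by[OF f _ s] gal_Units[OF \<delta> s] \<delta> by simp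
    moreover have "conj_by E (conj_by E f (inv \<delta>)) (gal \<delta> s) = conj_by E f (inv \<delta> \<otimes> gal \<delta> s)"
      using f \<delta> s by (simp add: E.conj_by_mult gal_Units)
    ultimately show ?thesis
      using f \<delta> s by (simp add: E.conj_by_inv_eq_iff E.conj_by_closed gal_closed gal_Units)
  qed
  then show ?thesis
    unfolding defined_over_K_def by blast
qed

lemma moduli_in_Norm_f:
  assumes f: "f \<in> carrier E" and Af_K: "\<forall>\<alpha> \<in> Aut_f E f. \<forall>s \<in> carrier G. gal \<alpha> s \<in> Aut_f E f"
    and s: "s \<in> carrier G" and \<phi>: "\<phi> \<in> Units E" "gal f s = conj_by E f \<phi>"
  shows "\<phi> \<in> Norm_f E f"
proof (rule E.in_Norm_f_if_Aut_f_conj_by_eq[OF f \<phi>(1)])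
  show "Aut_f E (conj_by E f \<phi>) = Aut_f E f"
    using Aut_f_gal[OF f s] gal_image_Aut_f[OF Af_K s] \<phi>(2) by simp
qed

lemma moduli_cocycle:
  assumes f: "f \<in> carrier E" and s: "s \<in> carrier G" and t: "t \<in> carrier G"
    and \<phi>s: "\<phi>s \<in> Units E" "gal f s = conj_by E f \<phi>s"
    and \<phi>t: "\<phi>t \<in> Units E" "gal f t = conj_by E f \<phi>t"
    and \<phi>st: "\<phi>st \<in> Units E" "gal f (s \<otimes>\<^bsub>G\<^esub> t) = conj_by E f \<phi>st"
  shows "\<phi>st \<in> Aut_f E f #>\<^bsub>units_of E\<^esub> (\<phi>t \<otimes> gal \<phi>s t)"
  using E.in_Aut_f_rcos_iff[OF f \<phi>st(1)] gal_mult_conj_by[OF f s t \<phi>s \<phi>t] \<phi>st \<phi>s \<phi>t t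
  by (simp add: gal_Units)

lemma defined_over_K_iff_coboundary:
  assumes f: "f \<in> carrier E" and moduli: "\<forall>s \<in> carrier G. \<exists>\<phi> \<in> Units E. gal f s = conj_by E f \<phi>"
    and \<delta>: "\<delta> \<in> Units E"
  shows "defined_over_K G gal (conj_by E f (inv \<delta>))
    \<longleftrightarrow> (\<forall>s \<in> carrier G. \<forall>\<phi> \<in> Units E. gal f s = conj_by E f \<phi> \<longrightarrow>
          Aut_f E f #>\<^bsub>units_of E\<^esub> \<phi> = Aut_f E f #>\<^bsub>units_of E\<^esub> (inv \<delta> \<otimes> gal \<delta> s))"
proof -
  have "gal f s = conj_by E f (inv \<delta> \<otimes> gal \<delta> s)
      \<longleftrightarrow> (\<forall>\<phi> \<in> Units E. gal f s = conj_by E f \<phi> \<longrightarrow>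
          Aut_f E f #>\<^bsub>units_of E\<^esub> \<phi> = Aut_f E f #>\<^bsub>units_of E\<^esub> (inv \<delta> \<otimes> gal \<delta> s))"
    if s: "s \<in> carrier G" for s
    using moduli s E.conj_by_eq_iff_rcos_eq[OF f] \<delta> by (auto simp: gal_Units)
  then show ?thesis
    using defined_over_K_conj_by_inv_iff[OF f \<delta>] by simp
qed

end

theorem proposition10:
  fixes E (structure) and G :: "('g, 'n) monoid_scheme" and gal :: "'e \<Rightarrow> 'g \<Rightarrow> 'e" and f :: 'e
  assumes act: "galois_endo_action E G gal"
    and f_end: "f \<in> carrier E"
    and moduli: "\<forall>s \<in> carrier G. \<exists>\<phi> \<in> Units E. gal f s = conj_by E f \<phi>"
    and fin: "finite (Aut_f E f)"
    and Af_K: "\<forall>\<alpha> \<in> Aut_f E f. \<forall>s \<in> carrier G. gal \<alpha> s \<in> Aut_f E f"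
  shows
    "(\<forall>s \<in> carrier G. \<forall>\<phi> \<in> Units E. gal f s = conj_by E f \<phi> \<longrightarrow> \<phi> \<in> Norm_f E f)
     \<and> normal (Aut_f E f) ((AutGrp E)\<lparr>carrier := Norm_f E f\<rparr>)
     \<and> (\<forall>s \<in> carrier G. \<forall>t \<in> carrier G. \<forall>\<phi>s \<in> Units E. \<forall>\<phi>t \<in> Units E. \<forall>\<phi>st \<in> Units E.
          gal f s = conj_by E f \<phi>s \<longrightarrow> gal f t = conj_by E f \<phi>t
          \<longrightarrow> gal f (s \<otimes>\<^bsub>G\<^esub> t) = conj_by E f \<phi>st
          \<longrightarrow> \<phi>st \<in> Aut_f E f #>\<^bsub>AutGrp E\<^esub> (\<phi>t \<otimes> gal \<phi>s t))
     \<and> ((\<exists>\<gamma> \<in> Units E. defined_over_K G gal (conj_by E f \<gamma>))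
        \<longleftrightarrow> (\<exists>\<delta> \<in> Units E. \<forall>s \<in> carrier G. \<forall>\<phi> \<in> Units E.
               gal f s = conj_by E f \<phi> \<longrightarrow>
               Aut_f E f #>\<^bsub>AutGrp E\<^esub> \<phi> = Aut_f E f #>\<^bsub>AutGrp E\<^esub> (inv \<delta> \<otimes> gal \<delta> s)))"
proof -
  interpret galois_endo_action E G gal by (rule act)
  have "(\<exists>\<gamma> \<in> Units E. defined_over_K G gal (conj_by E f \<gamma>))
      \<longleftrightarrow> (\<exists>\<delta> \<in> Units E. defined_over_K G gal (conj_by E f (inv \<delta>)))"
    by (metis E.Units_inv_Units E.Units_inv_inv)
  then show ?thesis
    using moduli_in_Norm_f[OF f_end Af_K] moduli_cocycle[OF f_end]
      group.subgroup_in_normalizer[OF E.units_group E.subgroup_Aut_f[OF f_end]]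
      defined_over_K_iff_coboundary[OF f_end moduli]
    unfolding Norm_f_def by auto
qed

end
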